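(* For each positive integer $N$, consider a lattice system with Hilbert space $\mathcal{H}^{(N)}=\bigotimes_{i=1}^N\mathcal{H}_i$, $\dim\mathcal{H}_i=d\ge2$ (so $D=d^N$), equipped with self-adjoint $\hat H^{(N)},\hat H'^{(N)}$, a density operator $\hat\rho^{0,(N)}$ and a unitary $\hat V^{(N)}$, such that: (A) the spectra $\{E_n\}$ of $\hat H^{(N)}$ and $\{E'_n\}$ of $\hat H'^{(N)}$ are non-degenerate; (B) if $E_k-E_l=E_m-E_n\ne0$ then $k=m$, $l=n$, and likewise for $\{E'_n\}$; and there is $c>0$ with $D_{\mathrm{eff}}=\bigl[\sum_n(\rho^0_{nn})^2\bigr]^{-1}\ge e^{cN}$ for all $N$. Then $\mathrm{Prob}[S_0\lesssim S'(\tau)]\sim1$; precisely, for every $\varepsilon>0$, $$\lim_{N\to\infty}\mathrm{Prob}\left[S'(\tau)\ge S_0-\varepsilon N\right]=1 .$$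
   Context: With $\{|E_n\rangle\}$, $\{|E'_n\rangle\}$ the eigenbases of $\hat H^{(N)},\hat H'^{(N)}$, $\rho^0_{kl}=\langle E_k|\hat\rho^{0,(N)}|E_l\rangle$, $U_{mn}=\langle E'_m|\hat V^{(N)}|E_n\rangle$, $\hbar>0$: $\rho'_{nn}(\tau)=\sum_{k,l}U_{nk}U_{nl}^*e^{-\mathrm{i}(E_k-E_l)\tau/\hbar}\rho^0_{kl}$, $S_0=-\sum_n\rho^0_{nn}\ln\rho^0_{nn}$, $S'(\tau)=-\sum_n\rho'_{nn}(\tau)\ln\rho'_{nn}(\tau)$ (convention $0\ln0=0$). $\mathrm{Prob}[P(\tau)]$ is the probability for $\tau$ uniformly distributed over $\tau\ge0$, i.e. $\lim_{T\to\infty}T^{-1}|\{\tau\in[0,T]:P(\tau)\}|$. The notations $\lesssim$ and $\sim$ mean $\le$ and $=$ with terms sub-leading in $N$ ignored. *)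

theory Defs
  imports "HOL-Analysis.Analysis"
begin

text \<open>Finite-dimensional objects of dimension D are represented in coordinates
  as functions on indices 0..<D (matrix entries in the relevant eigenbases).\<close>

definition nondegenerate_spectrum :: "nat \<Rightarrow> (nat \<Rightarrow> real) \<Rightarrow> bool" where
  "nondegenerate_spectrum D E \<longleftrightarrow> inj_on E {..<D}"

definition nondegenerate_gaps :: "nat \<Rightarrow> (nat \<Rightarrow> real) \<Rightarrow> bool" where
  "nondegenerate_gaps D E \<longleftrightarrow>
     (\<forall>k<D. \<forall>l<D. \<forall>m<D. \<forall>n<D.
        E k - E l = E m - E n \<and> E k - E l \<noteq> 0 \<longrightarrow> k = m \<and> l = n)"

definition density_matrix :: "nat \<Rightarrow> (nat \<Rightarrow> nat \<Rightarrow> complex) \<Rightarrow> bool" where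
  "density_matrix D \<rho> \<longleftrightarrow>
     (\<forall>k<D. \<forall>l<D. \<rho> k l = cnj (\<rho> l k)) \<and>
     (\<forall>v :: nat \<Rightarrow> complex. Re (\<Sum>k<D. \<Sum>l<D. cnj (v k) * \<rho> k l * v l) \<ge> 0) \<and>
     (\<Sum>n<D. \<rho> n n) = 1"

definition unitary_matrix :: "nat \<Rightarrow> (nat \<Rightarrow> nat \<Rightarrow> complex) \<Rightarrow> bool" where
  "unitary_matrix D U \<longleftrightarrow>
     (\<forall>k<D. \<forall>l<D. (\<Sum>m<D. cnj (U m k) * U m l) = (if k = l then 1 else 0))"

text \<open>Diagonal elements of the evolved state in the eigenbasis of H'.\<close>
definition rho_prime_diag ::
  "nat \<Rightarrow> real \<Rightarrow> (nat \<Rightarrow> real) \<Rightarrow> (nat \<Rightarrow> nat \<Rightarrow> complex) \<Rightarrow> (nat \<Rightarrow> nat \<Rightarrow> complex)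
   \<Rightarrow> real \<Rightarrow> nat \<Rightarrow> real" where
  "rho_prime_diag D hbar E U \<rho> \<tau> n =
     Re (\<Sum>k<D. \<Sum>l<D. U n k * cnj (U n l)
          * exp (- \<i> * complex_of_real ((E k - E l) * \<tau> / hbar)) * \<rho> k l)"

text \<open>Shannon entropy of a distribution on 0..<D (0 * ln 0 = 0 automatically).\<close>
definition diag_entropy :: "nat \<Rightarrow> (nat \<Rightarrow> real) \<Rightarrow> real" where
  "diag_entropy D p = - (\<Sum>n<D. p n * ln (p n))"

definition time_fraction :: "(real \<Rightarrow> bool) \<Rightarrow> real \<Rightarrow> real" where
  "time_fraction P T = measure lborel {\<tau> \<in> {0..T}. P \<tau>} / T"

end

theory Submission
  imports Defs "HOL-Real_Asymp.Real_Asymp"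
begin

text \<open>Write \<open>p\<^sub>k = \<rho>\<^sup>0\<^sub>k\<^sub>k\<close> and \<open>q\<^sub>n(\<tau>) = \<rho>'\<^sub>n\<^sub>n(\<tau>)\<close>. An entropy is controlled by the masses its
  distribution puts above the levels \<open>e\<^sup>-\<^sup>j\<^sup>h\<close>, \<open>1 \<le> j \<le> J\<close>: up to \<open>h x\<close> and an error
  \<open>2 e\<^sup>-\<^sup>J\<^sup>h\<^sup>/\<^sup>2\<close>, \<open>-x ln x\<close> is \<open>h\<close> times the number of levels above \<open>x\<close>. Split the indices
  into the block \<open>A\<close> of populations \<open>p\<^sub>k\<close> above \<open>e\<^sup>-\<^sup>(\<^sup>j\<^sup>+\<^sup>1\<^sup>)\<^sup>h\<close> and the rest \<open>B\<close>. For the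
  positive form of \<open>\<rho>\<^sup>0\<close> one has \<open>Q(x + y) \<le> (1 + s) Q(x) + (1 + 1/s) Q(y)\<close>, so the mass of
  \<open>q(\<tau>)\<close> above \<open>e\<^sup>-\<^sup>j\<^sup>h\<close> exceeds the mass of \<open>p\<close> on \<open>A\<close> only a little unless the
  contribution of \<open>B\<close>, measured by \<open>\<Sum>\<^sub>n |\<rho>'\<^sub>n\<^sub>n\<^sub>,\<^sub>B(\<tau>)|\<^sup>2\<close>, is large. Since the energies and
  their gaps are non-degenerate, the time average of that quantity keeps only resonant terms
  and is at most \<open>2 max\<^sub>k\<^sub>\<in>\<^sub>B p\<^sub>k \<le> 2 e\<^sup>-\<^sup>(\<^sup>j\<^sup>+\<^sup>1\<^sup>)\<^sup>h\<close>; by Markov's inequality it is small except on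
  a fraction \<open>O(e\<^sup>-\<^sup>h)\<close> of the times. With \<open>h = \<epsilon> N / 4\<close> and \<open>J\<close> of order \<open>(ln d)/\<epsilon>\<close> the
  entropy drops by at most \<open>\<epsilon> N\<close> except on a fraction of times that vanishes as \<open>N \<rightarrow> \<infinity>\<close>.\<close>

section \<open>Time averages\<close>

lemma has_integral_cos_scaled:
  fixes w T :: real
  assumes "w \<noteq> 0" "T \<ge> 0"
  shows "((\<lambda>t. cos (w * t)) has_integral sin (w * T) / w) {0..T}"
proof -
  have "((\<lambda>t. cos (w * t)) has_integral sin (w * T) / w - sin (w * 0) / w) {0..T}"
    using assms
    by (intro fundamental_theorem_of_calculus)
      (auto simp flip: has_real_derivative_iff_has_vector_derivative intro!: derivative_eq_intros)
  then show ?thesis by simp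
qed

lemma has_integral_sin_scaled:
  fixes w T :: real
  assumes "w \<noteq> 0" "T \<ge> 0"
  shows "((\<lambda>t. sin (w * t)) has_integral (1 - cos (w * T)) / w) {0..T}"
proof -
  have "((\<lambda>t. sin (w * t)) has_integral - cos (w * T) / w - - cos (w * 0) / w) {0..T}"
    using assms
    by (intro fundamental_theorem_of_calculus)
      (auto simp flip: has_real_derivative_iff_has_vector_derivative intro!: derivative_eq_intros)
  then show ?thesis by (simp add: diff_divide_distrib)
qed

definition time_avg :: "(real \<Rightarrow> real) \<Rightarrow> real \<Rightarrow> real" where
  "time_avg f T = integral {0..T} f / T"

lemma time_avg_trig_tendsto:
  fixes a b w :: real
  shows "((\<lambda>T. time_avg (\<lambda>t. a * cos (w * t) + b * sin (w * t)) T)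
           \<longlongrightarrow> (if w = 0 then a else 0)) at_top"
proof (cases "w = 0")
  case True
  have "\<forall>\<^sub>F T in at_top. time_avg (\<lambda>t. a * cos (w * t) + b * sin (w * t)) T = a"
    using eventually_gt_at_top[of 0] by eventually_elim (simp add: time_avg_def True)
  with True show ?thesis by (simp add: tendsto_eventually)
next
  case False
  define C where "C = (\<bar>a\<bar> + 2 * \<bar>b\<bar>) / \<bar>w\<bar>"
  have avg: "time_avg (\<lambda>t. a * cos (w * t) + b * sin (w * t)) T
      = (a * sin (w * T) + b * (1 - cos (w * T))) / w / T" if "T > 0" for T
  proof -
    have "((\<lambda>t. a * cos (w * t) + b * sin (w * t))
          has_integral a * (sin (w * T) / w) + b * ((1 - cos (w * T)) / w)) {0..T}"
      using that False
      by (intro has_integral_add has_integral_mult_right has_integral_cos_scaled has_integral_sin_scaled) auto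
    then show ?thesis by (simp add: time_avg_def integral_unique add_divide_distrib)
  qed
  have bound: "\<bar>(a * sin (w * T) + b * (1 - cos (w * T))) / w\<bar> \<le> C" for T
  proof -
    have "\<bar>a * sin (w * T)\<bar> \<le> \<bar>a\<bar>" by (simp add: abs_mult mult_left_le)
    moreover have "\<bar>b * (1 - cos (w * T))\<bar> \<le> \<bar>b\<bar> * 2"
      unfolding abs_mult by (intro mult_left_mono) (auto simp: abs_le_iff)
    ultimately show ?thesis
      unfolding C_def abs_divide by (intro divide_right_mono) auto
  qed
  have "((\<lambda>T. (a * sin (w * T) + b * (1 - cos (w * T))) / w / T) \<longlongrightarrow> 0) at_top"
  proof (rule Lim_null_comparison)
    show "\<forall>\<^sub>F T in at_top. norm ((a * sin (w * T) + b * (1 - cos (w * T))) / w / T) \<le> C / T"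
      using eventually_gt_at_top[of 0]
    proof eventually_elim
      case (elim T)
      have "norm ((a * sin (w * T) + b * (1 - cos (w * T))) / w / T)
          = \<bar>(a * sin (w * T) + b * (1 - cos (w * T))) / w\<bar> / T"
        using elim by (simp only: real_norm_def abs_divide[of _ T] abs_of_pos)
      also have "\<dots> \<le> C / T" using elim bound by (intro divide_right_mono) auto
      finally show ?case .
    qed
    show "((\<lambda>T. C / T) \<longlongrightarrow> 0) at_top" by real_asymp
  qed
  then show ?thesis
    using False by (simp add: tendsto_cong[OF eventually_mono[OF eventually_gt_at_top[of 0] avg]])
qed

lemma time_avg_sum_tendsto:
  assumes "finite I" "\<And>i. i \<in> I \<Longrightarrow> continuous_on UNIV (f i)"
    "\<And>i. i \<in> I \<Longrightarrow> ((\<lambda>T. time_avg (f i) T) \<longlongrightarrow> L i) at_top"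
  shows "((\<lambda>T. time_avg (\<lambda>t. \<Sum>i\<in>I. f i t) T) \<longlongrightarrow> (\<Sum>i\<in>I. L i)) at_top"
proof -
  have "time_avg (\<lambda>t. \<Sum>i\<in>I. f i t) T = (\<Sum>i\<in>I. time_avg (f i) T)" for T
  proof -
    have "integral {0..T} (\<lambda>t. \<Sum>i\<in>I. f i t) = (\<Sum>i\<in>I. integral {0..T} (f i))"
      using assms(1,2)
      by (intro integral_sum) (auto intro: integrable_continuous_interval continuous_on_subset)
    then show ?thesis by (simp add: time_avg_def sum_divide_distrib)
  qed
  then show ?thesis using assms by (simp add: tendsto_sum)
qed

lemma superlevel_set_Icc_measurable:
  fixes F :: "real \<Rightarrow> real"
  assumes "continuous_on UNIV F"
  shows "{t \<in> {0..T}. a \<le> F t} \<in> sets lborel"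
proof -
  have "closed ({0..T} \<inter> {t. a \<le> F t})"
    using assms by (intro closed_Int closed_Collect_le continuous_on_const) auto
  moreover have "{t \<in> {0..T}. a \<le> F t} = {0..T} \<inter> {t. a \<le> F t}" by blast
  ultimately show ?thesis by (simp add: borel_closed)
qed

lemma markov_inequality_Icc:
  fixes F :: "real \<Rightarrow> real"
  assumes "T \<ge> 0" "a > 0" "continuous_on UNIV F" "\<And>t. F t \<ge> 0"
  shows "measure lborel {t \<in> {0..T}. a \<le> F t} \<le> integral {0..T} F / a"
proof -
  let ?S = "{t \<in> {0..T}. a \<le> F t}"
  have S: "?S \<in> sets lborel" using assms(3) by (rule superlevel_set_Icc_measurable)
  have "emeasure lborel ?S \<le> emeasure lborel {0..T}" by (rule emeasure_mono) auto
  also have "\<dots> < \<infinity>" using assms(1) by simp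
  finally have "((\<lambda>x. 1) has_integral measure lborel ?S) ?S"
    using S by (intro has_integral_measure_lborel) auto
  then have "((\<lambda>x. a) has_integral a * measure lborel ?S) ?S"
    using has_integral_mult_right[of "\<lambda>x. 1::real" _ ?S a] by simp
  then have "((\<lambda>x. if x \<in> ?S then a else 0) has_integral a * measure lborel ?S) {0..T}"
    by (subst has_integral_restrict) auto
  moreover have "(F has_integral integral {0..T} F) {0..T}"
    by (intro integrable_integral integrable_continuous_interval continuous_on_subset[OF assms(3)]) auto
  ultimately have "a * measure lborel ?S \<le> integral {0..T} F"
    by (rule has_integral_le) (simp add: assms(4))
  then show ?thesis using assms(2) by (simp add: field_simps)
qed

section \<open>Density matrices and unitary matrices\<close>

definition quad_form :: "nat set \<Rightarrow> (nat \<Rightarrow> nat \<Rightarrow> complex) \<Rightarrow> (nat \<Rightarrow> complex) \<Rightarrow> real" where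
  "quad_form X \<rho> v = Re (\<Sum>k\<in>X. \<Sum>l\<in>X. cnj (v k) * \<rho> k l * v l)"

lemma complex_mult_cnj_eq_norm_sq:
  "z * cnj z = complex_of_real ((cmod z)\<^sup>2)" "cnj z * z = complex_of_real ((cmod z)\<^sup>2)"
  by (simp_all only: complex_norm_square mult.commute)

lemma quad_form_restrict:
  assumes "X \<subseteq> {..<D}"
  shows "quad_form {..<D} \<rho> (\<lambda>k. if k \<in> X then v k else 0) = quad_form X \<rho> v"
proof -
  have "(\<Sum>k<D. \<Sum>l<D. cnj (if k \<in> X then v k else 0) * \<rho> k l * (if l \<in> X then v l else 0))
      = (\<Sum>k<D. if k \<in> X then \<Sum>l<D. if l \<in> X then cnj (v k) * \<rho> k l * v l else 0 else 0)"
    by (intro sum.cong refl) (auto intro!: sum.cong)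
  also have "\<dots> = (\<Sum>k\<in>X. \<Sum>l\<in>X. cnj (v k) * \<rho> k l * v l)"
  proof -
    have "{k. k < D \<and> k \<in> X} = X" using assms by auto
    then show ?thesis by (simp add: sum.inter_filter[symmetric])
  qed
  finally show ?thesis by (simp add: quad_form_def)
qed

lemma quad_form_nonneg:
  assumes "density_matrix D \<rho>" "X \<subseteq> {..<D}"
  shows "quad_form X \<rho> v \<ge> 0"
proof -
  have "quad_form {..<D} \<rho> w \<ge> 0" for w
    using assms(1) unfolding density_matrix_def quad_form_def by blast
  then show ?thesis using quad_form_restrict[OF assms(2)] by metis
qed

text \<open>Positivity applied to \<open>\<surd>s x - y / \<surd>s\<close> cancels the cross terms of \<open>Q(x + y)\<close>.\<close>

lemma quad_form_add_le:
  assumes "density_matrix D \<rho>" "s > 0"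
  shows "quad_form {..<D} \<rho> (\<lambda>k. x k + y k)
         \<le> (1 + s) * quad_form {..<D} \<rho> x + (1 + 1/s) * quad_form {..<D} \<rho> y"
proof -
  let ?a = "complex_of_real (sqrt s)" and ?b = "complex_of_real (1 / sqrt s)"
  have ab: "cnj ?a = ?a" "cnj ?b = ?b" "?a * ?a = of_real s" "?b * ?b = of_real (1/s)" "?a * ?b = 1"
    using assms(2) by (simp_all flip: of_real_mult)
  have pointwise: "cnj (x k + y k) * r * (x l + y l) + cnj (?a * x k - ?b * y k) * r * (?a * x l - ?b * y l)
      = of_real (1 + s) * (cnj (x k) * r * x l) + of_real (1 + 1/s) * (cnj (y k) * r * y l)" for k l r
  proof -
    have "cnj (x k + y k) * r * (x l + y l) + cnj (?a * x k - ?b * y k) * r * (?a * x l - ?b * y l)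
      = (1 + ?a * ?a) * (cnj (x k) * r * x l) + (1 + ?b * ?b) * (cnj (y k) * r * y l)
        + (1 - ?a * ?b) * (cnj (x k) * r * y l) + (1 - ?a * ?b) * (cnj (y k) * r * x l)"
    proof -
      have "cnj (?a * x k - ?b * y k) = ?a * cnj (x k) - ?b * cnj (y k)" using ab by simp
      then show ?thesis unfolding complex_cnj_add by algebra
    qed
    then show ?thesis using ab(3-5) by simp
  qed
  have "quad_form {..<D} \<rho> (\<lambda>k. x k + y k) + quad_form {..<D} \<rho> (\<lambda>k. ?a * x k - ?b * y k)
      = Re (\<Sum>k<D. \<Sum>l<D. cnj (x k + y k) * \<rho> k l * (x l + y l)
              + cnj (?a * x k - ?b * y k) * \<rho> k l * (?a * x l - ?b * y l))"
    by (simp add: quad_form_def sum.distrib)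
  also have "\<dots> = Re (\<Sum>k<D. \<Sum>l<D. of_real (1 + s) * (cnj (x k) * \<rho> k l * x l)
                                 + of_real (1 + 1/s) * (cnj (y k) * \<rho> k l * y l))"
    by (simp only: pointwise)
  also have "\<dots> = (1 + s) * quad_form {..<D} \<rho> x + (1 + 1/s) * quad_form {..<D} \<rho> y"
    by (simp add: quad_form_def sum.distrib flip: sum_distrib_left)
  finally have "quad_form {..<D} \<rho> (\<lambda>k. x k + y k) + quad_form {..<D} \<rho> (\<lambda>k. ?a * x k - ?b * y k)
      = (1 + s) * quad_form {..<D} \<rho> x + (1 + 1/s) * quad_form {..<D} \<rho> y" .
  moreover have "quad_form {..<D} \<rho> (\<lambda>k. ?a * x k - ?b * y k) \<ge> 0"
    using assms(1) by (rule quad_form_nonneg) simp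
  ultimately show ?thesis by linarith
qed

lemma density_matrix_diag_nonneg:
  assumes "density_matrix D \<rho>" "k < D"
  shows "Re (\<rho> k k) \<ge> 0"
proof -
  have "quad_form {k} \<rho> (\<lambda>_. 1) \<ge> 0" using assms by (intro quad_form_nonneg) auto
  then show ?thesis by (simp add: quad_form_def)
qed

lemma density_matrix_diag_sum:
  assumes "density_matrix D \<rho>"
  shows "(\<Sum>k<D. Re (\<rho> k k)) = 1"
proof -
  have "(\<Sum>n<D. \<rho> n n) = 1" using assms unfolding density_matrix_def by blast
  then show ?thesis by (metis Re_sum one_complex.sel)
qed

lemma density_matrix_diag_real:
  assumes "density_matrix D \<rho>" "k < D"
  shows "\<rho> k k = complex_of_real (Re (\<rho> k k))"
proof -
  have "\<rho> k k = cnj (\<rho> k k)" using assms unfolding density_matrix_def by blast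
  then have "Im (\<rho> k k) = Im (cnj (\<rho> k k))" by (rule arg_cong)
  then have "Im (\<rho> k k) = 0" by simp
  then show ?thesis by (simp add: complex_eq_iff)
qed

text \<open>Positivity on the vector \<open>e\<^sub>k - t \<rho>\<^sub>l\<^sub>k e\<^sub>l\<close> for every real \<open>t\<close>: a discriminant argument.\<close>

lemma density_matrix_entry_bound:
  assumes rho: "density_matrix D \<rho>" and kl: "k < D" "l < D"
  shows "(cmod (\<rho> k l))\<^sup>2 \<le> Re (\<rho> k k) * Re (\<rho> l l)"
proof (cases "k = l")
  case True
  have "cmod (\<rho> k k) = \<bar>Re (\<rho> k k)\<bar>"
    using density_matrix_diag_real[OF rho kl(1)] by (metis norm_of_real)
  then show ?thesis using True by (simp add: power2_eq_square)
next
  case False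
  define c where "c = (cmod (\<rho> k l))\<^sup>2"
  define pk where "pk = Re (\<rho> k k)"
  define pl where "pl = Re (\<rho> l l)"
  have herm: "\<rho> l k = cnj (\<rho> k l)" using rho kl unfolding density_matrix_def by blast
  have discr: "pk - 2 * t * c + t\<^sup>2 * c * pl \<ge> 0" for t :: real
  proof -
    define lam where "lam = - complex_of_real t * cnj (\<rho> k l)"
    define v where "v = (\<lambda>j. if j = k then 1 else if j = l then lam else (0::complex))"
    have a1: "\<rho> k l * lam = - complex_of_real (t * c)"
      unfolding lam_def c_def by (simp add: complex_mult_cnj_eq_norm_sq mult_ac)
    have a2: "cnj lam * \<rho> l k = - complex_of_real (t * c)"
      unfolding lam_def c_def herm by (simp add: complex_mult_cnj_eq_norm_sq mult_ac)
    have a3: "cnj lam * \<rho> l l * lam = complex_of_real (t\<^sup>2 * c) * \<rho> l l"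
      unfolding lam_def c_def by (simp add: complex_mult_cnj_eq_norm_sq mult_ac power2_eq_square)
    have "0 \<le> quad_form {k, l} \<rho> v" using kl by (intro quad_form_nonneg[OF rho]) auto
    also have "\<dots> = Re (\<rho> k k + \<rho> k l * lam + cnj lam * \<rho> l k + cnj lam * \<rho> l l * lam)"
      unfolding quad_form_def v_def using False by (simp add: algebra_simps)
    also have "\<dots> = pk - 2 * t * c + t\<^sup>2 * c * pl"
      unfolding a1 a2 a3 pk_def pl_def by simp
    finally show ?thesis .
  qed
  have "pl \<ge> 0" unfolding pl_def by (rule density_matrix_diag_nonneg[OF rho kl(2)])
  then consider "pl > 0" | "pl = 0" by linarith
  then have "c \<le> pk * pl"
  proof cases
    case 1
    with discr[of "1 / pl"] show ?thesis by (simp add: power2_eq_square field_simps)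
  next
    case 2
    with discr[of "(pk + 1) / (2 * c)"] show ?thesis
      by (cases "c = 0") (simp_all add: field_simps)
  qed
  then show ?thesis unfolding c_def pk_def pl_def .
qed

lemma unitary_matrix_orthonormal_columns:
  assumes "unitary_matrix D U" "k < D" "l < D"
  shows "(\<Sum>n<D. U n k * cnj (U n l)) = (if k = l then 1 else 0)"
proof -
  have "(\<Sum>m<D. cnj (U m l) * U m k) = (if l = k then 1 else 0)"
    using assms unfolding unitary_matrix_def by blast
  then show ?thesis by (auto simp: mult.commute)
qed

text \<open>With \<open>P = U U\<^sup>* e\<^sub>n\<close> one has \<open>\<parallel>P\<parallel>\<^sup>2 = r\<close> and \<open>P\<^sub>n = r\<close>, where \<open>r\<close> is the squared norm
  of row \<open>n\<close>; hence \<open>r\<^sup>2 \<le> r\<close>.\<close>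

lemma unitary_matrix_row_norm_le_1:
  assumes U: "unitary_matrix D U" and n: "n < D"
  shows "(\<Sum>k<D. (cmod (U n k))\<^sup>2) \<le> 1"
proof -
  define r where "r = (\<Sum>k<D. (cmod (U n k))\<^sup>2)"
  define P where "P m = (\<Sum>k<D. U m k * cnj (U n k))" for m
  have Pn: "P n = complex_of_real r"
    unfolding P_def r_def by (simp add: complex_mult_cnj_eq_norm_sq)
  have "complex_of_real (\<Sum>m<D. (cmod (P m))\<^sup>2) = (\<Sum>m<D. P m * cnj (P m))"
    by (simp add: complex_mult_cnj_eq_norm_sq)
  also have "\<dots> = (\<Sum>m<D. \<Sum>j<D. \<Sum>k<D. (U m k * cnj (U m j)) * (cnj (U n k) * U n j))"
    unfolding P_def by (simp add: sum_distrib_left sum_distrib_right cnj_sum mult_ac)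
  also have "\<dots> = (\<Sum>j<D. \<Sum>k<D. \<Sum>m<D. (U m k * cnj (U m j)) * (cnj (U n k) * U n j))"
    by (rule trans[OF sum.swap], rule sum.cong[OF refl], rule sum.swap)
  also have "\<dots> = (\<Sum>j<D. \<Sum>k<D. (\<Sum>m<D. U m k * cnj (U m j)) * (cnj (U n k) * U n j))"
    by (simp add: sum_distrib_right)
  also have "\<dots> = (\<Sum>j<D. \<Sum>k<D. if k = j then cnj (U n k) * U n j else 0)"
    by (intro sum.cong refl) (simp add: unitary_matrix_orthonormal_columns[OF U])
  also have "\<dots> = (\<Sum>k<D. cnj (U n k) * U n k)" by simp
  also have "\<dots> = complex_of_real r" unfolding r_def by (simp add: complex_mult_cnj_eq_norm_sq)
  finally have "(\<Sum>m<D. (cmod (P m))\<^sup>2) = r" using of_real_eq_iff by blast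
  moreover have "(cmod (P n))\<^sup>2 \<le> (\<Sum>m<D. (cmod (P m))\<^sup>2)"
    using n by (intro member_le_sum) auto
  ultimately have "r * r \<le> r * 1" using Pn by (simp add: power2_eq_square)
  moreover have "r \<ge> 0" unfolding r_def by (simp add: sum_nonneg)
  ultimately show ?thesis unfolding r_def[symmetric] by (cases "r = 0") (auto simp: mult_le_cancel_left)
qed

section \<open>Populations of the evolved state\<close>

text \<open>\<open>\<rho>'\<^sub>n\<^sub>n(\<tau>)\<close> is the quadratic form of \<open>\<rho>\<^sup>0\<close> at the vector \<open>evolved_row U E hbar \<tau> n\<close>;
  restricting the form to an index set \<open>X\<close> gives the contribution of the block \<open>X\<close> of \<open>\<rho>\<^sup>0\<close>.\<close>

definition evolved_row ::
  "(nat \<Rightarrow> nat \<Rightarrow> complex) \<Rightarrow> (nat \<Rightarrow> real) \<Rightarrow> real \<Rightarrow> real \<Rightarrow> nat \<Rightarrow> nat \<Rightarrow> complex" where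
  "evolved_row U E hbar \<tau> n k = cnj (U n k) * exp (\<i> * complex_of_real (E k * \<tau> / hbar))"

definition phase :: "(nat \<Rightarrow> real) \<Rightarrow> real \<Rightarrow> real \<Rightarrow> nat \<Rightarrow> nat \<Rightarrow> complex" where
  "phase E hbar \<tau> k l = exp (- \<i> * complex_of_real ((E k - E l) * \<tau> / hbar))"

lemma evolved_row_mult:
  "cnj (evolved_row U E hbar \<tau> n k) * r * evolved_row U E hbar \<tau> n l
   = U n k * cnj (U n l) * phase E hbar \<tau> k l * r"
proof -
  have "exp (- \<i> * complex_of_real (E k * \<tau> / hbar)) * exp (\<i> * complex_of_real (E l * \<tau> / hbar))
      = phase E hbar \<tau> k l"
    unfolding phase_def
    by (simp add: exp_add[symmetric] left_diff_distrib diff_divide_distrib algebra_simps)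
  moreover have "cnj (evolved_row U E hbar \<tau> n k) = U n k * exp (- \<i> * complex_of_real (E k * \<tau> / hbar))"
    unfolding evolved_row_def by (simp add: exp_cnj)
  ultimately show ?thesis unfolding evolved_row_def by (metis mult.assoc mult.commute mult.left_commute)
qed

lemma rho_prime_diag_eq_quad_form:
  "rho_prime_diag D hbar E U \<rho> \<tau> n = quad_form {..<D} \<rho> (evolved_row U E hbar \<tau> n)"
  unfolding rho_prime_diag_def quad_form_def evolved_row_mult phase_def by (simp add: mult_ac)

lemma sum_quad_form_evolved_row:
  assumes U: "unitary_matrix D U" and X: "X \<subseteq> {..<D}"
  shows "(\<Sum>n<D. quad_form X \<rho> (evolved_row U E hbar \<tau> n)) = (\<Sum>k\<in>X. Re (\<rho> k k))"
proof -
  have "(\<Sum>n<D. quad_form X \<rho> (evolved_row U E hbar \<tau> n))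
      = Re (\<Sum>n<D. \<Sum>k\<in>X. \<Sum>l\<in>X. U n k * cnj (U n l) * phase E hbar \<tau> k l * \<rho> k l)"
    by (simp only: quad_form_def evolved_row_mult Re_sum)
  also have "(\<Sum>n<D. \<Sum>k\<in>X. \<Sum>l\<in>X. U n k * cnj (U n l) * phase E hbar \<tau> k l * \<rho> k l)
      = (\<Sum>k\<in>X. \<Sum>l\<in>X. (\<Sum>n<D. U n k * cnj (U n l)) * (phase E hbar \<tau> k l * \<rho> k l))"
    by (rule trans[OF sum.swap], rule sum.cong[OF refl], rule trans[OF sum.swap])
      (simp add: sum_distrib_right mult.assoc)
  also have "\<dots> = (\<Sum>k\<in>X. \<Sum>l\<in>X. if k = l then phase E hbar \<tau> k l * \<rho> k l else 0)"
  proof (intro sum.cong refl)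
    fix k l assume "k \<in> X" "l \<in> X"
    then have "k < D" "l < D" using X by auto
    then show "(\<Sum>n<D. U n k * cnj (U n l)) * (phase E hbar \<tau> k l * \<rho> k l)
        = (if k = l then phase E hbar \<tau> k l * \<rho> k l else 0)"
      by (simp add: unitary_matrix_orthonormal_columns[OF U])
  qed
  also have "\<dots> = (\<Sum>k\<in>X. \<rho> k k)"
    using finite_subset[OF X] by (simp add: phase_def)
  finally show ?thesis by (simp add: Re_sum)
qed

lemma rho_prime_diag_nonneg:
  assumes "density_matrix D \<rho>"
  shows "rho_prime_diag D hbar E U \<rho> \<tau> n \<ge> 0"
  unfolding rho_prime_diag_eq_quad_form using assms by (rule quad_form_nonneg) simp

lemma rho_prime_diag_sum:
  assumes "density_matrix D \<rho>" "unitary_matrix D U"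
  shows "(\<Sum>n<D. rho_prime_diag D hbar E U \<rho> \<tau> n) = 1"
  unfolding rho_prime_diag_eq_quad_form
  using sum_quad_form_evolved_row[OF assms(2) order_refl] density_matrix_diag_sum[OF assms(1)]
  by simp

definition transition_amp ::
  "(nat \<Rightarrow> nat \<Rightarrow> complex) \<Rightarrow> (nat \<Rightarrow> nat \<Rightarrow> complex) \<Rightarrow> nat \<Rightarrow> nat \<Rightarrow> nat \<Rightarrow> complex" where
  "transition_amp U \<rho> n k l = U n k * cnj (U n l) * \<rho> k l"

definition block_part ::
  "nat set \<Rightarrow> (nat \<Rightarrow> nat \<Rightarrow> complex) \<Rightarrow> (nat \<Rightarrow> nat \<Rightarrow> complex) \<Rightarrow> (nat \<Rightarrow> real) \<Rightarrow> real
   \<Rightarrow> real \<Rightarrow> nat \<Rightarrow> complex" where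
  "block_part B U \<rho> E hbar \<tau> n = (\<Sum>k\<in>B. \<Sum>l\<in>B. transition_amp U \<rho> n k l * phase E hbar \<tau> k l)"

definition block_power ::
  "nat \<Rightarrow> nat set \<Rightarrow> (nat \<Rightarrow> nat \<Rightarrow> complex) \<Rightarrow> (nat \<Rightarrow> nat \<Rightarrow> complex) \<Rightarrow> (nat \<Rightarrow> real)
   \<Rightarrow> real \<Rightarrow> real \<Rightarrow> real" where
  "block_power D B U \<rho> E hbar \<tau> = (\<Sum>n<D. (cmod (block_part B U \<rho> E hbar \<tau> n))\<^sup>2)"

definition bohr_freq_diff :: "(nat \<Rightarrow> real) \<Rightarrow> real \<Rightarrow> nat \<Rightarrow> nat \<Rightarrow> nat \<Rightarrow> nat \<Rightarrow> real" where
  "bohr_freq_diff E hbar k l k' l' = ((E k - E l) - (E k' - E l')) / hbar"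

definition resonant_power ::
  "nat \<Rightarrow> nat set \<Rightarrow> (nat \<Rightarrow> nat \<Rightarrow> complex) \<Rightarrow> (nat \<Rightarrow> nat \<Rightarrow> complex) \<Rightarrow> (nat \<Rightarrow> real)
   \<Rightarrow> real \<Rightarrow> real" where
  "resonant_power D B U \<rho> E hbar =
     (\<Sum>n<D. \<Sum>k'\<in>B. \<Sum>k\<in>B. \<Sum>l'\<in>B. \<Sum>l\<in>B.
        if bohr_freq_diff E hbar k l k' l' = 0
        then Re (transition_amp U \<rho> n k l * cnj (transition_amp U \<rho> n k' l')) else 0)"

lemma quad_form_evolved_row_eq_block_part:
  "quad_form B \<rho> (evolved_row U E hbar \<tau> n) = Re (block_part B U \<rho> E hbar \<tau> n)"
  unfolding quad_form_def block_part_def evolved_row_mult transition_amp_def by (simp add: mult_ac)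

lemma phase_mult_cnj_phase:
  "phase E hbar \<tau> k l * cnj (phase E hbar \<tau> k' l')
   = exp (- \<i> * complex_of_real (bohr_freq_diff E hbar k l k' l' * \<tau>))"
proof -
  have minus_ii_add: "- \<i> * complex_of_real a + \<i> * complex_of_real b = - \<i> * complex_of_real (a - b)"
    for a b :: real
    by (simp add: algebra_simps)
  have "cnj (exp (- \<i> * complex_of_real x)) = exp (\<i> * complex_of_real x)" for x
    by (simp add: exp_cnj)
  then have "phase E hbar \<tau> k l * cnj (phase E hbar \<tau> k' l')
     = exp (- \<i> * complex_of_real ((E k - E l) * \<tau> / hbar) + \<i> * complex_of_real ((E k' - E l') * \<tau> / hbar))"
    by (simp only: phase_def exp_add[symmetric])
  also have "- \<i> * complex_of_real ((E k - E l) * \<tau> / hbar) + \<i> * complex_of_real ((E k' - E l') * \<tau> / hbar)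
      = - \<i> * complex_of_real ((E k - E l) * \<tau> / hbar - (E k' - E l') * \<tau> / hbar)"
    by (rule minus_ii_add)
  also have "(E k - E l) * \<tau> / hbar - (E k' - E l') * \<tau> / hbar = bohr_freq_diff E hbar k l k' l' * \<tau>"
    unfolding bohr_freq_diff_def by (simp add: diff_divide_distrib left_diff_distrib)
  finally show ?thesis .
qed

lemma Re_mult_exp_minus_ii:
  "Re (z * exp (- \<i> * complex_of_real x)) = Re z * cos x + Im z * sin x"
proof -
  have "exp (- \<i> * complex_of_real x) = Complex (cos x) (- sin x)"
    by (simp add: complex_eq_iff exp_Euler cos_of_real sin_of_real Re_exp Im_exp)
  then show ?thesis by simp
qed

lemma block_power_eq_trig_sum:
  "block_power D B U \<rho> E hbar = (\<lambda>\<tau>. \<Sum>n<D. \<Sum>k'\<in>B. \<Sum>k\<in>B. \<Sum>l'\<in>B. \<Sum>l\<in>B.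
      Re (transition_amp U \<rho> n k l * cnj (transition_amp U \<rho> n k' l'))
        * cos (bohr_freq_diff E hbar k l k' l' * \<tau>)
    + Im (transition_amp U \<rho> n k l * cnj (transition_amp U \<rho> n k' l'))
        * sin (bohr_freq_diff E hbar k l k' l' * \<tau>))"
proof
  fix \<tau>
  let ?a = "transition_amp U \<rho>" and ?p = "phase E hbar \<tau>"
  have "(cmod (block_part B U \<rho> E hbar \<tau> n))\<^sup>2
      = Re (\<Sum>k'\<in>B. \<Sum>k\<in>B. \<Sum>l'\<in>B. \<Sum>l\<in>B. (?a n k l * cnj (?a n k' l')) * (?p k l * cnj (?p k' l')))"
    for n
  proof -
    have "(cmod (block_part B U \<rho> E hbar \<tau> n))\<^sup>2
        = Re (block_part B U \<rho> E hbar \<tau> n * cnj (block_part B U \<rho> E hbar \<tau> n))"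
      by (simp add: complex_mult_cnj_eq_norm_sq)
    also have "block_part B U \<rho> E hbar \<tau> n * cnj (block_part B U \<rho> E hbar \<tau> n)
      = (\<Sum>k'\<in>B. \<Sum>k\<in>B. \<Sum>l'\<in>B. \<Sum>l\<in>B. (?a n k l * cnj (?a n k' l')) * (?p k l * cnj (?p k' l')))"
      unfolding block_part_def by (simp add: sum_distrib_left sum_distrib_right cnj_sum mult_ac)
    finally show ?thesis .
  qed
  then show "block_power D B U \<rho> E hbar \<tau> = (\<Sum>n<D. \<Sum>k'\<in>B. \<Sum>k\<in>B. \<Sum>l'\<in>B. \<Sum>l\<in>B.
      Re (?a n k l * cnj (?a n k' l')) * cos (bohr_freq_diff E hbar k l k' l' * \<tau>)
    + Im (?a n k l * cnj (?a n k' l')) * sin (bohr_freq_diff E hbar k l k' l' * \<tau>))"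
    unfolding block_power_def phase_mult_cnj_phase Re_sum Re_mult_exp_minus_ii by simp
qed

lemma block_power_continuous: "continuous_on UNIV (block_power D B U \<rho> E hbar)"
  unfolding block_power_eq_trig_sum by (intro continuous_intros)

lemma block_power_nonneg: "block_power D B U \<rho> E hbar \<tau> \<ge> 0"
  unfolding block_power_def by (intro sum_nonneg) simp

text \<open>Only the resonant terms, with vanishing Bohr frequency difference, survive the time average.\<close>

lemma time_avg_block_power_tendsto:
  assumes "finite B"
  shows "((\<lambda>T. time_avg (block_power D B U \<rho> E hbar) T) \<longlongrightarrow> resonant_power D B U \<rho> E hbar) at_top"
  unfolding block_power_eq_trig_sum resonant_power_def using assms
  by (intro time_avg_sum_tendsto ballI finite_lessThan continuous_intros time_avg_trig_tendsto) auto

section \<open>Resonant terms\<close>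

lemma bohr_freq_diff_eq_0_iff:
  assumes "hbar > 0" "nondegenerate_spectrum D E" "nondegenerate_gaps D E"
    and "k < D" "l < D" "k' < D" "l' < D"
  shows "bohr_freq_diff E hbar k l k' l' = 0 \<longleftrightarrow> (k = l \<and> k' = l') \<or> (k = k' \<and> l = l' \<and> k \<noteq> l)"
proof -
  have inj: "inj_on E {..<D}" using assms(2) unfolding nondegenerate_spectrum_def .
  have "bohr_freq_diff E hbar k l k' l' = 0 \<longleftrightarrow> E k - E l = E k' - E l'"
    using assms(1) unfolding bohr_freq_diff_def by auto
  also have "\<dots> \<longleftrightarrow> (k = l \<and> k' = l') \<or> (k = k' \<and> l = l' \<and> k \<noteq> l)"
  proof
    assume eq: "E k - E l = E k' - E l'"
    show "(k = l \<and> k' = l') \<or> (k = k' \<and> l = l' \<and> k \<noteq> l)"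
    proof (cases "E k = E l")
      case True
      then have "E k' = E l'" using eq by simp
      with True show ?thesis using inj assms(4-7) by (auto dest: inj_onD)
    next
      case False
      then show ?thesis using assms(3-7) eq unfolding nondegenerate_gaps_def by auto
    qed
  qed auto
  finally show ?thesis .
qed

lemma sum_resonant_index_pairs:
  fixes f :: "nat \<Rightarrow> nat \<Rightarrow> nat \<Rightarrow> nat \<Rightarrow> real"
  assumes B: "finite B"
  shows "(\<Sum>k'\<in>B. \<Sum>k\<in>B. \<Sum>l'\<in>B. \<Sum>l\<in>B.
           if (k = l \<and> k' = l') \<or> (k = k' \<and> l = l' \<and> k \<noteq> l) then f k l k' l' else 0)
         = (\<Sum>k'\<in>B. \<Sum>k\<in>B. f k k k' k') + (\<Sum>k\<in>B. \<Sum>l\<in>B - {k}. f k l k l)"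
proof -
  have diag_l: "(\<Sum>l\<in>B. if k = l \<and> k' = l' then f k l k' l' else 0) = (if k' = l' then f k k k' l' else 0)"
    if "k \<in> B" for k k' l'
    using B that by (cases "k' = l'") (simp_all add: sum.delta)
  have pairs_l: "(\<Sum>l\<in>B. if l = l' \<and> k' \<noteq> l then f k' l k' l' else 0) = (if k' \<noteq> l' then f k' l' k' l' else 0)"
    if "l' \<in> B" for k' l'
  proof -
    have "(\<Sum>l\<in>B. if l = l' \<and> k' \<noteq> l then f k' l k' l' else 0)
        = (\<Sum>l\<in>B. if l = l' then (if k' \<noteq> l then f k' l k' l' else 0) else 0)"
      by (intro sum.cong) auto
    then show ?thesis using B that by (simp add: sum.delta')
  qed
  have pairs: "(\<Sum>k\<in>B. \<Sum>l'\<in>B. \<Sum>l\<in>B. if k = k' \<and> l = l' \<and> k \<noteq> l then f k l k' l' else 0)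
      = (\<Sum>l\<in>B - {k'}. f k' l k' l)" if "k' \<in> B" for k'
  proof -
    have "(\<Sum>k\<in>B. \<Sum>l'\<in>B. \<Sum>l\<in>B. if k = k' \<and> l = l' \<and> k \<noteq> l then f k l k' l' else 0)
        = (\<Sum>k\<in>B. if k = k' then \<Sum>l'\<in>B. \<Sum>l\<in>B. if l = l' \<and> k \<noteq> l then f k l k' l' else 0 else 0)"
      by (intro sum.cong refl) auto
    also have "\<dots> = (\<Sum>l'\<in>B. \<Sum>l\<in>B. if l = l' \<and> k' \<noteq> l then f k' l k' l' else 0)"
      using B that by (simp add: sum.delta')
    also have "\<dots> = (\<Sum>l'\<in>B. if k' \<noteq> l' then f k' l' k' l' else 0)"
      by (intro sum.cong refl pairs_l)
    also have "\<dots> = (\<Sum>l\<in>{l'\<in>B. k' \<noteq> l'}. f k' l k' l)"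
      using B by (simp add: sum.inter_filter)
    also have "{l'\<in>B. k' \<noteq> l'} = B - {k'}" by auto
    finally show ?thesis .
  qed
  have "(\<Sum>k'\<in>B. \<Sum>k\<in>B. \<Sum>l'\<in>B. \<Sum>l\<in>B.
           if (k = l \<and> k' = l') \<or> (k = k' \<and> l = l' \<and> k \<noteq> l) then f k l k' l' else 0)
      = (\<Sum>k'\<in>B. \<Sum>k\<in>B. \<Sum>l'\<in>B. \<Sum>l\<in>B. if k = l \<and> k' = l' then f k l k' l' else 0)
        + (\<Sum>k'\<in>B. \<Sum>k\<in>B. \<Sum>l'\<in>B. \<Sum>l\<in>B. if k = k' \<and> l = l' \<and> k \<noteq> l then f k l k' l' else 0)"
    unfolding sum.distrib[symmetric] by (intro sum.cong refl) auto
  also have "\<dots> = (\<Sum>k'\<in>B. \<Sum>k\<in>B. f k k k' k') + (\<Sum>k'\<in>B. \<Sum>l\<in>B - {k'}. f k' l k' l)"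
    using B by (simp add: diag_l pairs sum.delta)
  finally show ?thesis .
qed

text \<open>Under the non-degeneracy assumptions a resonance either pairs diagonal entries, \<open>k = l\<close> and
  \<open>k' = l'\<close>, or an off-diagonal entry with itself.\<close>

lemma resonant_power_eq:
  assumes "hbar > 0" "nondegenerate_spectrum D E" "nondegenerate_gaps D E" "B \<subseteq> {..<D}"
  shows "resonant_power D B U \<rho> E hbar
       = (\<Sum>n<D. (cmod (\<Sum>k\<in>B. transition_amp U \<rho> n k k))\<^sup>2
                + (\<Sum>k\<in>B. \<Sum>l\<in>B - {k}. (cmod (transition_amp U \<rho> n k l))\<^sup>2))"
  unfolding resonant_power_def
proof (intro sum.cong refl)
  fix n
  let ?f = "\<lambda>k l k' l'. Re (transition_amp U \<rho> n k l * cnj (transition_amp U \<rho> n k' l'))"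
  have fin: "finite B" using assms(4) finite_subset by blast
  have "(\<Sum>k'\<in>B. \<Sum>k\<in>B. \<Sum>l'\<in>B. \<Sum>l\<in>B. if bohr_freq_diff E hbar k l k' l' = 0 then ?f k l k' l' else 0)
      = (\<Sum>k'\<in>B. \<Sum>k\<in>B. \<Sum>l'\<in>B. \<Sum>l\<in>B.
           if (k = l \<and> k' = l') \<or> (k = k' \<and> l = l' \<and> k \<noteq> l) then ?f k l k' l' else 0)"
  proof (intro sum.cong refl)
    fix k' k l' l assume "k' \<in> B" "k \<in> B" "l' \<in> B" "l \<in> B"
    then have "bohr_freq_diff E hbar k l k' l' = 0 \<longleftrightarrow> (k = l \<and> k' = l') \<or> (k = k' \<and> l = l' \<and> k \<noteq> l)"
      using assms(4) by (intro bohr_freq_diff_eq_0_iff[OF assms(1-3)]) auto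
    then show "(if bohr_freq_diff E hbar k l k' l' = 0 then ?f k l k' l' else 0)
        = (if (k = l \<and> k' = l') \<or> (k = k' \<and> l = l' \<and> k \<noteq> l) then ?f k l k' l' else 0)"
      by simp
  qed
  also have "\<dots> = (\<Sum>k'\<in>B. \<Sum>k\<in>B. ?f k k k' k') + (\<Sum>k\<in>B. \<Sum>l\<in>B - {k}. ?f k l k l)"
    by (rule sum_resonant_index_pairs[OF fin])
  also have "(\<Sum>k'\<in>B. \<Sum>k\<in>B. ?f k k k' k') = (cmod (\<Sum>k\<in>B. transition_amp U \<rho> n k k))\<^sup>2"
  proof -
    have "Re ((\<Sum>k\<in>B. transition_amp U \<rho> n k k) * cnj (\<Sum>k'\<in>B. transition_amp U \<rho> n k' k'))
        = (\<Sum>k\<in>B. \<Sum>k'\<in>B. ?f k k k' k')"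
      by (simp add: sum_product cnj_sum Re_sum)
    also have "\<dots> = (\<Sum>k'\<in>B. \<Sum>k\<in>B. ?f k k k' k')" by (rule sum.swap)
    finally show ?thesis by (simp only: complex_mult_cnj_eq_norm_sq Re_complex_of_real)
  qed
  also have "(\<Sum>k\<in>B. \<Sum>l\<in>B - {k}. ?f k l k l) = (\<Sum>k\<in>B. \<Sum>l\<in>B - {k}. (cmod (transition_amp U \<rho> n k l))\<^sup>2)"
    by (simp add: complex_mult_cnj_eq_norm_sq)
  finally show "(\<Sum>k'\<in>B. \<Sum>k\<in>B. \<Sum>l'\<in>B. \<Sum>l\<in>B.
      if bohr_freq_diff E hbar k l k' l' = 0 then ?f k l k' l' else 0)
    = (cmod (\<Sum>k\<in>B. transition_amp U \<rho> n k k))\<^sup>2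
      + (\<Sum>k\<in>B. \<Sum>l\<in>B - {k}. (cmod (transition_amp U \<rho> n k l))\<^sup>2)" .
qed

lemma transition_amp_norm_sq_le:
  assumes "density_matrix D \<rho>" "k < D" "l < D"
  shows "(cmod (transition_amp U \<rho> n k l))\<^sup>2
         \<le> ((cmod (U n k))\<^sup>2 * Re (\<rho> k k)) * ((cmod (U n l))\<^sup>2 * Re (\<rho> l l))"
proof -
  have "(cmod (transition_amp U \<rho> n k l))\<^sup>2 = (cmod (U n k))\<^sup>2 * (cmod (U n l))\<^sup>2 * (cmod (\<rho> k l))\<^sup>2"
    unfolding transition_amp_def by (simp add: norm_mult power_mult_distrib)
  also have "\<dots> \<le> (cmod (U n k))\<^sup>2 * (cmod (U n l))\<^sup>2 * (Re (\<rho> k k) * Re (\<rho> l l))"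
    using density_matrix_entry_bound[OF assms] by (intro mult_left_mono) auto
  finally show ?thesis by (simp add: mult_ac)
qed

lemma resonant_row_le:
  assumes rho: "density_matrix D \<rho>" and B: "B \<subseteq> {..<D}"
  shows "(cmod (\<Sum>k\<in>B. transition_amp U \<rho> n k k))\<^sup>2
           + (\<Sum>k\<in>B. \<Sum>l\<in>B - {k}. (cmod (transition_amp U \<rho> n k l))\<^sup>2)
         \<le> 2 * (\<Sum>k\<in>B. (cmod (U n k))\<^sup>2 * Re (\<rho> k k))\<^sup>2"
proof -
  define u where "u k = (cmod (U n k))\<^sup>2 * Re (\<rho> k k)" for k
  have u_nonneg: "u k \<ge> 0" if "k \<in> B" for k
  proof -
    have "k < D" using that B by auto
    then show ?thesis unfolding u_def using density_matrix_diag_nonneg[OF rho] by simp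
  qed
  have amp_le: "(cmod (transition_amp U \<rho> n k l))\<^sup>2 \<le> u k * u l" if "k \<in> B" "l \<in> B" for k l
    unfolding u_def using that B by (intro transition_amp_norm_sq_le[OF rho]) auto
  have "(cmod (\<Sum>k\<in>B. transition_amp U \<rho> n k k))\<^sup>2 \<le> (\<Sum>k\<in>B. cmod (transition_amp U \<rho> n k k))\<^sup>2"
    by (intro power_mono norm_sum) simp
  also have "\<dots> \<le> (\<Sum>k\<in>B. u k)\<^sup>2"
  proof (rule power_mono[OF sum_mono])
    fix k assume k: "k \<in> B"
    have "(cmod (transition_amp U \<rho> n k k))\<^sup>2 \<le> (u k)\<^sup>2"
      using amp_le[OF k k] by (simp only: power2_eq_square)
    then show "cmod (transition_amp U \<rho> n k k) \<le> u k" using u_nonneg[OF k] by (rule power2_le_imp_le)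
  qed (simp add: sum_nonneg)
  finally have diag: "(cmod (\<Sum>k\<in>B. transition_amp U \<rho> n k k))\<^sup>2 \<le> (\<Sum>k\<in>B. u k)\<^sup>2" .
  have "(\<Sum>k\<in>B. \<Sum>l\<in>B - {k}. (cmod (transition_amp U \<rho> n k l))\<^sup>2) \<le> (\<Sum>k\<in>B. \<Sum>l\<in>B. u k * u l)"
  proof (rule sum_mono)
    fix k assume k: "k \<in> B"
    have "(\<Sum>l\<in>B - {k}. (cmod (transition_amp U \<rho> n k l))\<^sup>2) \<le> (\<Sum>l\<in>B - {k}. u k * u l)"
      using k amp_le by (intro sum_mono) auto
    also have "\<dots> \<le> (\<Sum>l\<in>B. u k * u l)"
      using k u_nonneg finite_subset[OF B] by (intro sum_mono2) auto
    finally show "(\<Sum>l\<in>B - {k}. (cmod (transition_amp U \<rho> n k l))\<^sup>2) \<le> (\<Sum>l\<in>B. u k * u l)" .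
  qed
  also have "\<dots> = (\<Sum>k\<in>B. u k)\<^sup>2" by (simp add: power2_eq_square sum_product)
  finally show ?thesis using diag unfolding u_def by linarith
qed

lemma resonant_power_le:
  assumes rho: "density_matrix D \<rho>" and U: "unitary_matrix D U" and B: "B \<subseteq> {..<D}"
    and "hbar > 0" "nondegenerate_spectrum D E" "nondegenerate_gaps D E"
    and m: "\<And>k. k \<in> B \<Longrightarrow> Re (\<rho> k k) \<le> m" "m \<ge> 0"
  shows "resonant_power D B U \<rho> E hbar \<le> 2 * m"
proof -
  define w where "w n = (\<Sum>k\<in>B. (cmod (U n k))\<^sup>2 * Re (\<rho> k k))" for n
  have p_nonneg: "Re (\<rho> k k) \<ge> 0" if "k \<in> B" for k
    using that B density_matrix_diag_nonneg[OF rho] by auto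
  have w_nonneg: "w n \<ge> 0" for n
    unfolding w_def using p_nonneg by (intro sum_nonneg) auto
  have w_le: "w n \<le> m" if n: "n < D" for n
  proof -
    have "w n \<le> (\<Sum>k\<in>B. (cmod (U n k))\<^sup>2 * m)"
      unfolding w_def using m(1) by (intro sum_mono mult_left_mono) auto
    also have "\<dots> = (\<Sum>k\<in>B. (cmod (U n k))\<^sup>2) * m" by (rule sum_distrib_right[symmetric])
    also have "\<dots> \<le> (\<Sum>k<D. (cmod (U n k))\<^sup>2) * m"
      using B m(2) by (intro mult_right_mono sum_mono2) auto
    also have "\<dots> \<le> 1 * m"
      using unitary_matrix_row_norm_le_1[OF U n] m(2) by (intro mult_right_mono)
    finally show ?thesis by simp
  qed
  have w_sum: "(\<Sum>n<D. w n) \<le> 1"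
  proof -
    have col: "(\<Sum>n<D. (cmod (U n k))\<^sup>2) = 1" if "k \<in> B" for k
    proof -
      have "(\<Sum>n<D. U n k * cnj (U n k)) = 1"
        using that B unitary_matrix_orthonormal_columns[OF U] by auto
      then have "complex_of_real (\<Sum>n<D. (cmod (U n k))\<^sup>2) = 1"
        by (simp add: complex_mult_cnj_eq_norm_sq)
      then show ?thesis using of_real_eq_1_iff by blast
    qed
    have "(\<Sum>n<D. w n) = (\<Sum>k\<in>B. (\<Sum>n<D. (cmod (U n k))\<^sup>2) * Re (\<rho> k k))"
      unfolding w_def by (rule trans[OF sum.swap]) (simp add: sum_distrib_right)
    also have "\<dots> = (\<Sum>k\<in>B. Re (\<rho> k k))" using col by simp
    also have "\<dots> \<le> (\<Sum>k<D. Re (\<rho> k k))"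
      using B density_matrix_diag_nonneg[OF rho] by (intro sum_mono2) auto
    finally show ?thesis using density_matrix_diag_sum[OF rho] by simp
  qed
  have "resonant_power D B U \<rho> E hbar \<le> (\<Sum>n<D. 2 * (w n)\<^sup>2)"
    unfolding resonant_power_eq[OF assms(4-6) B] w_def
    by (intro sum_mono resonant_row_le[OF rho B])
  also have "\<dots> \<le> (\<Sum>n<D. 2 * m * w n)"
    using w_le w_nonneg by (intro sum_mono) (simp add: power2_eq_square mult_right_mono)
  also have "\<dots> = 2 * m * (\<Sum>n<D. w n)" by (rule sum_distrib_left[symmetric])
  also have "\<dots> \<le> 2 * m" using w_sum m(2) by (simp add: mult_left_le)
  finally show ?thesis .
qed

lemma eventually_time_avg_block_power_less:
  assumes "density_matrix D \<rho>" "unitary_matrix D U" "B \<subseteq> {..<D}"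
    and "hbar > 0" "nondegenerate_spectrum D E" "nondegenerate_gaps D E"
    and "\<And>k. k \<in> B \<Longrightarrow> Re (\<rho> k k) \<le> m" "m > 0"
  shows "\<forall>\<^sub>F T in at_top. time_avg (block_power D B U \<rho> E hbar) T < 3 * m"
proof -
  have "resonant_power D B U \<rho> E hbar < 3 * m"
    using resonant_power_le[OF assms(1-7) less_imp_le[OF assms(8)]] assms(8) by linarith
  with time_avg_block_power_tendsto[OF finite_subset[OF assms(3) finite_lessThan]] show ?thesis
    by (rule order_tendstoD(2))
qed

section \<open>Entropy and level masses\<close>

definition level_count :: "nat \<Rightarrow> real \<Rightarrow> real \<Rightarrow> real" where
  "level_count J h L = (\<Sum>j=1..J. if real j * h \<le> L then h else 0)"

lemma level_count_Suc:
  "level_count (Suc J) h L = level_count J h L + (if real (Suc J) * h \<le> L then h else 0)"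
  unfolding level_count_def by simp

lemma level_count_le:
  assumes "h > 0" "L \<ge> 0"
  shows "level_count J h L \<le> L \<and> level_count J h L \<le> real J * h"
proof (induction J)
  case 0
  then show ?case using assms by (simp add: level_count_def)
next
  case (Suc J)
  then show ?case unfolding level_count_Suc using assms by (auto simp: algebra_simps)
qed

lemma level_count_ge:
  assumes "h > 0"
  shows "level_count J h L \<ge> min (L - h) (real J * h)"
proof (induction J)
  case 0
  then show ?case using assms by (simp add: level_count_def)
next
  case (Suc J)
  then show ?case
    unfolding level_count_Suc using assms by (auto simp: algebra_simps min_def split: if_splits)
qed

text \<open>The levels \<open>e\<^sup>-\<^sup>j\<^sup>h\<close> lying above \<open>x\<close> count \<open>-ln x\<close> in steps of \<open>h\<close>.\<close>

lemma level_sum_eq_level_count: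
  assumes "x > 0" "h > 0"
  shows "h * (\<Sum>j=1..J. if x \<le> exp (- (real j * h)) then x else 0) = x * level_count J h (- ln x)"
proof -
  have "x \<le> exp (- (real j * h)) \<longleftrightarrow> real j * h \<le> - ln x" for j
    using assms ln_le_cancel_iff[of x "exp (- (real j * h))"] by auto
  then show ?thesis unfolding level_count_def
    by (simp add: sum_distrib_left if_distrib mult.commute cong: if_cong)
qed

lemma neg_xlnx_ge_level_sum:
  assumes "0 \<le> x" "x \<le> 1" "h > 0"
  shows "- (x * ln x) \<ge> h * (\<Sum>j=1..J. if x \<le> exp (- (real j * h)) then x else 0)"
proof (cases "x = 0")
  case False
  then have x: "x > 0" using assms by simp
  have "x * level_count J h (- ln x) \<le> x * (- ln x)"
    using level_count_le[OF assms(3), where L="- ln x" and J=J] x assms(2) by (intro mult_left_mono) auto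
  then show ?thesis using level_sum_eq_level_count[OF x assms(3)] by simp
qed simp

lemma neg_xlnx_le_2_sqrt:
  assumes "x > 0"
  shows "- (x * ln x) \<le> 2 * sqrt x"
proof -
  have "ln (1 / sqrt x) < 1 / sqrt x" using assms by (intro ln_less_self) simp
  moreover have "ln (1 / sqrt x) = - ln x / 2" using assms by (simp add: ln_div ln_sqrt)
  ultimately have "- ln x \<le> 2 / sqrt x" by simp
  then have "x * - ln x \<le> x * (2 / sqrt x)" using assms by (intro mult_left_mono) auto
  also have "x * (2 / sqrt x) = 2 * sqrt x"
  proof -
    have "sqrt x * sqrt x * (2 / sqrt x) = 2 * sqrt x" using assms by (simp add: field_simps)
    then show ?thesis using assms by simp
  qed
  finally show ?thesis by simp
qed

text \<open>Values of \<open>x\<close> below the lowest level \<open>e\<^sup>-\<^sup>J\<^sup>h\<close> contribute at most \<open>2 e\<^sup>-\<^sup>J\<^sup>h\<^sup>/\<^sup>2\<close>,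
  by \<open>-x ln x \<le> 2\<surd>x\<close>.\<close>

lemma neg_xlnx_le_level_sum:
  assumes "0 \<le> x" "x \<le> 1" "h > 0"
  shows "- (x * ln x) \<le> x * h + h * (\<Sum>j=1..J. if x \<le> exp (- (real j * h)) then x else 0)
           + 2 * exp (- (real J * h) / 2)"
proof (cases "x = 0")
  case True
  then show ?thesis by (simp add: sum_nonneg)
next
  case False
  then have x: "x > 0" using assms by simp
  have level_sum_nonneg: "0 \<le> h * (\<Sum>j=1..J. if x \<le> exp (- (real j * h)) then x else 0)"
    using assms by (intro mult_nonneg_nonneg sum_nonneg) auto
  show ?thesis
  proof (cases "- ln x \<le> real J * h")
    case True
    then have "- ln x \<le> h + level_count J h (- ln x)"
      using level_count_ge[OF assms(3), where L="- ln x" and J=J] assms(3) by (auto simp: min_def split: if_splits)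
    then have "x * - ln x \<le> x * (h + level_count J h (- ln x))"
      using x by (intro mult_left_mono) auto
    then have "x * - ln x \<le> x * h + x * level_count J h (- ln x)"
      by (simp add: distrib_left)
    then show ?thesis
      using level_sum_eq_level_count[OF x assms(3), of J] exp_gt_zero[of "- (real J * h) / 2"]
      by linarith
  next
    case False
    then have "exp (ln x) < exp (- (real J * h))" by simp
    then have "x \<le> exp (- (real J * h))" using x by simp
    then have "sqrt x \<le> sqrt (exp (- (real J * h)))" by simp
    also have "\<dots> = exp (- (real J * h) / 2)"
    proof -
      have "exp (- (real J * h)) = (exp (- (real J * h) / 2))\<^sup>2"
        by (simp add: power2_eq_square exp_add[symmetric])
      then show ?thesis by simp
    qed
    finally show ?thesis
      using neg_xlnx_le_2_sqrt[OF x] level_sum_nonneg mult_pos_pos[OF x assms(3)] by linarith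
  qed
qed

definition lower_mass :: "nat \<Rightarrow> (nat \<Rightarrow> real) \<Rightarrow> real \<Rightarrow> real" where
  "lower_mass D p x = (\<Sum>k<D. if p k \<le> x then p k else 0)"

definition upper_mass :: "nat \<Rightarrow> (nat \<Rightarrow> real) \<Rightarrow> real \<Rightarrow> real" where
  "upper_mass D p x = (\<Sum>k<D. if p k > x then p k else 0)"

lemma lower_mass_add_upper_mass: "lower_mass D p x + upper_mass D p x = (\<Sum>k<D. p k)"
  unfolding lower_mass_def upper_mass_def sum.distrib[symmetric] by (intro sum.cong) auto

lemma upper_mass_nonneg: "(\<And>k. k < D \<Longrightarrow> p k \<ge> 0) \<Longrightarrow> upper_mass D p x \<ge> 0"
  unfolding upper_mass_def by (intro sum_nonneg) auto

lemma lower_mass_nonneg: "(\<And>k. k < D \<Longrightarrow> p k \<ge> 0) \<Longrightarrow> lower_mass D p x \<ge> 0"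
  unfolding lower_mass_def by (intro sum_nonneg) auto

lemma prob_le_1:
  fixes p :: "nat \<Rightarrow> real"
  assumes "\<And>k. k < D \<Longrightarrow> p k \<ge> 0" "(\<Sum>k<D. p k) = 1" "k < D"
  shows "p k \<le> 1"
proof -
  have "p k \<le> (\<Sum>k<D. p k)" using assms(1,3) by (intro member_le_sum) auto
  then show ?thesis using assms(2) by simp
qed

lemma entropy_ge_lower_masses:
  assumes "\<And>k. k < D \<Longrightarrow> p k \<ge> 0" "(\<Sum>k<D. p k) = 1" "h > 0"
  shows "diag_entropy D p \<ge> h * (\<Sum>j=1..J. lower_mass D p (exp (- (real j * h))))"
proof -
  have "h * (\<Sum>j=1..J. lower_mass D p (exp (- (real j * h))))
      = (\<Sum>k<D. h * (\<Sum>j=1..J. if p k \<le> exp (- (real j * h)) then p k else 0))"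
    unfolding lower_mass_def by (simp add: sum_distrib_left) (rule sum.swap)
  also have "\<dots> \<le> (\<Sum>k<D. - (p k * ln (p k)))"
    using assms prob_le_1[OF assms(1,2)] by (intro sum_mono neg_xlnx_ge_level_sum) auto
  also have "\<dots> = diag_entropy D p" unfolding diag_entropy_def by (simp add: sum_negf)
  finally show ?thesis .
qed

lemma entropy_le_lower_masses:
  assumes "\<And>k. k < D \<Longrightarrow> p k \<ge> 0" "(\<Sum>k<D. p k) = 1" "h > 0"
  shows "diag_entropy D p \<le> h + h * (\<Sum>j=1..J. lower_mass D p (exp (- (real j * h))))
                           + 2 * real D * exp (- (real J * h) / 2)"
proof -
  have "diag_entropy D p = (\<Sum>k<D. - (p k * ln (p k)))"
    unfolding diag_entropy_def by (simp add: sum_negf)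
  also have "\<dots> \<le> (\<Sum>k<D. p k * h + h * (\<Sum>j=1..J. if p k \<le> exp (- (real j * h)) then p k else 0)
                          + 2 * exp (- (real J * h) / 2))"
    using assms prob_le_1[OF assms(1,2)] by (intro sum_mono neg_xlnx_le_level_sum) auto
  also have "\<dots> = h + h * (\<Sum>j=1..J. lower_mass D p (exp (- (real j * h))))
                  + 2 * real D * exp (- (real J * h) / 2)"
  proof -
    have "(\<Sum>k<D. p k * h) = h" using assms(2) by (simp add: sum_distrib_right[symmetric])
    moreover have "(\<Sum>k<D. h * (\<Sum>j=1..J. if p k \<le> exp (- (real j * h)) then p k else 0))
        = h * (\<Sum>j=1..J. lower_mass D p (exp (- (real j * h))))"
      unfolding lower_mass_def by (simp add: sum_distrib_left) (rule sum.swap)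
    ultimately show ?thesis by (simp add: sum.distrib)
  qed
  finally show ?thesis .
qed

text \<open>Both entropies are sandwiched by the level sums \<open>h \<Sum>\<^sub>j lower_mass (e\<^sup>-\<^sup>j\<^sup>h)\<close>; the
  hypothesis compares the two level sums after a shift by one level, which telescopes.\<close>

lemma entropy_ge_of_upper_mass_bounds:
  fixes p q :: "nat \<Rightarrow> real"
  assumes p: "\<And>k. k < D \<Longrightarrow> p k \<ge> 0" "(\<Sum>k<D. p k) = 1"
    and q: "\<And>k. k < D \<Longrightarrow> q k \<ge> 0" "(\<Sum>k<D. q k) = 1"
    and h: "h > 0"
    and levels: "\<And>j. j \<in> {1..J} \<Longrightarrow>
       upper_mass D q (exp (- (real j * h))) \<le> upper_mass D p (exp (- (real (Suc j) * h))) + \<eta>"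
  shows "diag_entropy D q
         \<ge> diag_entropy D p - 2 * h - h * real J * \<eta> - 2 * real D * exp (- (real J * h) / 2)"
proof -
  define P where "P j = lower_mass D p (exp (- (real j * h)))" for j
  define Q where "Q j = lower_mass D q (exp (- (real j * h)))" for j
  have "(\<Sum>j=1..J. Q j) \<ge> (\<Sum>j=1..J. P (Suc j) - \<eta>)"
  proof (intro sum_mono)
    fix j assume "j \<in> {1..J}"
    then show "P (Suc j) - \<eta> \<le> Q j"
      using levels[of j] lower_mass_add_upper_mass[of D p "exp (- (real (Suc j) * h))"]
        lower_mass_add_upper_mass[of D q "exp (- (real j * h))"] p(2) q(2)
      unfolding P_def Q_def by linarith
  qed
  also have "(\<Sum>j=1..J. P (Suc j) - \<eta>) = (\<Sum>j=1..J. P j) - P 1 + P (Suc J) - real J * \<eta>"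
    by (induction J) (simp_all add: sum_subtractf)
  finally have Q_ge: "(\<Sum>j=1..J. Q j) \<ge> (\<Sum>j=1..J. P j) - P 1 + P (Suc J) - real J * \<eta>" .
  have "P 1 \<le> 1"
    using lower_mass_add_upper_mass[of D p] upper_mass_nonneg[of D p, OF p(1)] p(2)
    unfolding P_def by (metis le_add_same_cancel1)
  moreover have "P (Suc J) \<ge> 0" unfolding P_def by (rule lower_mass_nonneg[OF p(1)])
  ultimately have "(\<Sum>j=1..J. Q j) \<ge> (\<Sum>j=1..J. P j) - 1 - real J * \<eta>" using Q_ge by linarith
  then have "h * (\<Sum>j=1..J. Q j) \<ge> h * ((\<Sum>j=1..J. P j) - 1 - real J * \<eta>)"
    using h by (intro mult_left_mono) auto
  then show ?thesis
    using entropy_ge_lower_masses[OF q h, of J] entropy_le_lower_masses[OF p h, of J]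
    unfolding P_def Q_def by (simp add: algebra_simps)
qed

section \<open>Entropy along the time evolution\<close>

lemma sum_le_sqrt_of_sum_power2_le:
  fixes x :: "'a \<Rightarrow> real"
  assumes "finite G" "e > 0" "\<beta> > 0" "real (card G) * e \<le> 1" "(\<Sum>n\<in>G. (x n)\<^sup>2) \<le> \<beta> * e"
  shows "(\<Sum>n\<in>G. x n) \<le> sqrt \<beta>"
proof -
  define lam where "lam = sqrt \<beta> * e"
  have lam: "lam > 0" unfolding lam_def using assms(2,3) by simp
  have amgm: "y \<le> y\<^sup>2 / (2 * lam) + lam / 2" for y
  proof -
    have "0 \<le> (y - lam)\<^sup>2" by simp
    then have "2 * lam * y \<le> y\<^sup>2 + lam\<^sup>2" by (simp add: power2_eq_square algebra_simps)
    then show ?thesis using lam by (simp add: field_simps power2_eq_square)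
  qed
  have "(\<Sum>n\<in>G. x n) \<le> (\<Sum>n\<in>G. (x n)\<^sup>2 / (2 * lam) + lam / 2)"
    by (intro sum_mono amgm)
  also have "\<dots> = (\<Sum>n\<in>G. (x n)\<^sup>2) / (2 * lam) + real (card G) * lam / 2"
    by (simp add: sum.distrib sum_divide_distrib)
  also have "\<dots> \<le> \<beta> * e / (2 * lam) + sqrt \<beta> * 1 / 2"
    using assms(2-5) lam unfolding lam_def
    by (intro add_mono divide_right_mono) (auto simp: mult.left_commute[of _ "sqrt \<beta>"])
  also have "\<beta> * e / (2 * lam) = sqrt \<beta> / 2"
    unfolding lam_def using assms(2,3) by (simp add: field_simps)
  finally show ?thesis by simp
qed

lemma rho_prime_diag_le_blocks:
  assumes rho: "density_matrix D \<rho>" and "s > 0" and A: "A \<subseteq> {..<D}"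
  shows "rho_prime_diag D hbar E U \<rho> \<tau> n
         \<le> (1 + s) * quad_form A \<rho> (evolved_row U E hbar \<tau> n)
           + (1 + 1/s) * quad_form ({..<D} - A) \<rho> (evolved_row U E hbar \<tau> n)"
proof -
  let ?v = "evolved_row U E hbar \<tau> n"
  have "rho_prime_diag D hbar E U \<rho> \<tau> n
      = quad_form {..<D} \<rho> (\<lambda>k. (if k \<in> A then ?v k else 0) + (if k \<in> {..<D} - A then ?v k else 0))"
    unfolding rho_prime_diag_eq_quad_form quad_form_def
    by (intro arg_cong[where f = Re] sum.cong refl) auto
  also have "\<dots> \<le> (1 + s) * quad_form {..<D} \<rho> (\<lambda>k. if k \<in> A then ?v k else 0)
                + (1 + 1/s) * quad_form {..<D} \<rho> (\<lambda>k. if k \<in> {..<D} - A then ?v k else 0)"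
    by (rule quad_form_add_le[OF rho assms(2)])
  also have "\<dots> = (1 + s) * quad_form A \<rho> ?v + (1 + 1/s) * quad_form ({..<D} - A) \<rho> ?v"
    using quad_form_restrict[OF A] quad_form_restrict[of "{..<D} - A" D] by simp
  finally show ?thesis .
qed

text \<open>As at most \<open>1/e\<close> indices \<open>n\<close> have \<open>\<rho>'\<^sub>n\<^sub>n > e\<close>,
  the block contributes at most \<open>\<surd>\<beta>\<close> to their mass whenever its power is at most \<open>\<beta> e\<close>.\<close>

lemma upper_mass_rho_prime_diag_le:
  assumes rho: "density_matrix D \<rho>" and U: "unitary_matrix D U"
    and s: "s > 0" and e: "e > 0" and \<beta>: "\<beta> > 0"
    and small: "block_power D {k\<in>{..<D}. Re (\<rho> k k) \<le> thr} U \<rho> E hbar \<tau> \<le> \<beta> * e"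
  shows "upper_mass D (rho_prime_diag D hbar E U \<rho> \<tau>) e
         \<le> upper_mass D (\<lambda>k. Re (\<rho> k k)) thr + (s + (1 + 1/s) * sqrt \<beta>)"
proof -
  define q where "q n = rho_prime_diag D hbar E U \<rho> \<tau> n" for n
  define v where "v n = evolved_row U E hbar \<tau> n" for n
  define A where "A = {k\<in>{..<D}. Re (\<rho> k k) > thr}"
  define G where "G = {n\<in>{..<D}. q n > e}"
  have B: "{..<D} - A = {k\<in>{..<D}. Re (\<rho> k k) \<le> thr}" unfolding A_def by auto
  have AD: "A \<subseteq> {..<D}" and GD: "G \<subseteq> {..<D}" unfolding A_def G_def by auto
  have finG: "finite G" using GD finite_subset by blast
  have q_nonneg: "q n \<ge> 0" for n unfolding q_def by (rule rho_prime_diag_nonneg[OF rho])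
  have "(\<Sum>k\<in>A. Re (\<rho> k k)) \<le> (\<Sum>k<D. Re (\<rho> k k))"
    using AD density_matrix_diag_nonneg[OF rho] by (intro sum_mono2) auto
  then have pA: "(\<Sum>k\<in>A. Re (\<rho> k k)) \<le> 1" using density_matrix_diag_sum[OF rho] by simp
  have "(\<Sum>n\<in>G. quad_form A \<rho> (v n)) \<le> (\<Sum>n<D. quad_form A \<rho> (v n))"
    using GD quad_form_nonneg[OF rho AD] by (intro sum_mono2) auto
  also have "\<dots> = (\<Sum>k\<in>A. Re (\<rho> k k))"
    unfolding v_def by (rule sum_quad_form_evolved_row[OF U AD])
  finally have GA: "(\<Sum>n\<in>G. quad_form A \<rho> (v n)) \<le> (\<Sum>k\<in>A. Re (\<rho> k k))" .
  have "real (card G) * e = (\<Sum>n\<in>G. e)" by simp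
  also have "\<dots> \<le> (\<Sum>n\<in>G. q n)" unfolding G_def by (intro sum_mono) auto
  also have "\<dots> \<le> (\<Sum>n<D. q n)" using GD q_nonneg by (intro sum_mono2) auto
  finally have cardG: "real (card G) * e \<le> 1"
    unfolding q_def rho_prime_diag_sum[OF rho U] .
  have "(\<Sum>n\<in>G. (quad_form ({..<D} - A) \<rho> (v n))\<^sup>2)
      \<le> (\<Sum>n\<in>G. (cmod (block_part ({..<D} - A) U \<rho> E hbar \<tau> n))\<^sup>2)"
  proof (rule sum_mono)
    fix n
    have "\<bar>quad_form ({..<D} - A) \<rho> (v n)\<bar> \<le> cmod (block_part ({..<D} - A) U \<rho> E hbar \<tau> n)"
      unfolding v_def quad_form_evolved_row_eq_block_part by (rule abs_Re_le_cmod)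
    then show "(quad_form ({..<D} - A) \<rho> (v n))\<^sup>2 \<le> (cmod (block_part ({..<D} - A) U \<rho> E hbar \<tau> n))\<^sup>2"
      by (metis abs_ge_zero power2_abs power_mono)
  qed
  also have "\<dots> \<le> (\<Sum>n<D. (cmod (block_part ({..<D} - A) U \<rho> E hbar \<tau> n))\<^sup>2)"
    using GD by (intro sum_mono2) auto
  also have "\<dots> \<le> \<beta> * e" using small unfolding block_power_def B .
  finally have GB: "(\<Sum>n\<in>G. quad_form ({..<D} - A) \<rho> (v n)) \<le> sqrt \<beta>"
    by (rule sum_le_sqrt_of_sum_power2_le[OF finG e \<beta> cardG])
  have "upper_mass D q e = (\<Sum>n\<in>G. q n)"
    unfolding upper_mass_def G_def by (rule sum.inter_filter[symmetric]) simp
  also have "\<dots> \<le> (\<Sum>n\<in>G. (1 + s) * quad_form A \<rho> (v n) + (1 + 1/s) * quad_form ({..<D} - A) \<rho> (v n))"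
    unfolding q_def v_def by (intro sum_mono rho_prime_diag_le_blocks[OF rho s AD])
  also have "\<dots> = (1 + s) * (\<Sum>n\<in>G. quad_form A \<rho> (v n)) + (1 + 1/s) * (\<Sum>n\<in>G. quad_form ({..<D} - A) \<rho> (v n))"
    by (simp add: sum.distrib sum_distrib_left)
  also have "\<dots> \<le> (1 + s) * (\<Sum>k\<in>A. Re (\<rho> k k)) + (1 + 1/s) * sqrt \<beta>"
    using GA GB s by (intro add_mono mult_left_mono) auto
  also have "\<dots> \<le> (\<Sum>k\<in>A. Re (\<rho> k k)) + (s + (1 + 1/s) * sqrt \<beta>)"
    using pA s by (simp add: algebra_simps mult_left_le)
  also have "(\<Sum>k\<in>A. Re (\<rho> k k)) = upper_mass D (\<lambda>k. Re (\<rho> k k)) thr"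
    unfolding upper_mass_def A_def by (rule sum.inter_filter) simp
  finally show ?thesis unfolding q_def .
qed

lemma time_fraction_ge_of_bad_sets:
  fixes bad :: "nat \<Rightarrow> real set"
  assumes T: "T > 0" and I: "finite I"
    and bad: "\<And>i. i \<in> I \<Longrightarrow> bad i \<in> sets lborel" "\<And>i. i \<in> I \<Longrightarrow> bad i \<subseteq> {0..T}"
      "\<And>i. i \<in> I \<Longrightarrow> measure lborel (bad i) \<le> T * a"
    and P: "{\<tau> \<in> {0..T}. P \<tau>} \<in> sets lborel"
    and good: "\<And>\<tau>. \<tau> \<in> {0..T} \<Longrightarrow> (\<And>i. i \<in> I \<Longrightarrow> \<tau> \<notin> bad i) \<Longrightarrow> P \<tau>"
  shows "time_fraction P T \<ge> 1 - real (card I) * a"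
proof -
  let ?U = "\<Union>i\<in>I. bad i" and ?S = "{\<tau> \<in> {0..T}. P \<tau>}"
  have U: "?U \<in> sets lborel" "?U \<subseteq> {0..T}" using bad(1,2) I by auto
  have "measure lborel ?U \<le> (\<Sum>i\<in>I. measure lborel (bad i))"
    using bad(1) I by (intro measure_UNION_le) auto
  also have "\<dots> \<le> real (card I) * (T * a)"
    using bad(3) sum_mono[of I "\<lambda>i. measure lborel (bad i)" "\<lambda>_. T * a"] by simp
  finally have mU: "measure lborel ?U \<le> real (card I) * (T * a)" .
  have "measure lborel ({0..T} - ?U) = measure lborel {0..T} - measure lborel ?U"
    using U by (intro measure_Diff) (auto simp: emeasure_lborel_Icc_eq)
  then have "T * (1 - real (card I) * a) \<le> measure lborel ({0..T} - ?U)"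
    using mU T by (simp add: algebra_simps)
  also have "\<dots> \<le> measure lborel ?S"
  proof (rule measure_mono_fmeasurable)
    show "{0..T} - ?U \<subseteq> ?S" using good by blast
    have "{0..T} \<in> fmeasurable lborel" by (intro fmeasurableI) (auto simp: emeasure_lborel_Icc_eq)
    then show "?S \<in> fmeasurable lborel" by (rule fmeasurableI2[OF _ _ P]) auto
  qed (use U in auto)
  finally show ?thesis unfolding time_fraction_def using T by (simp add: field_simps)
qed

lemma entropy_rho_prime_diag_measurable:
  assumes "hbar \<noteq> 0"
  shows "(\<lambda>\<tau>. diag_entropy D (rho_prime_diag D hbar E U \<rho> \<tau>)) \<in> borel_measurable borel"
proof -
  have "continuous_on UNIV (\<lambda>\<tau>. rho_prime_diag D hbar E U \<rho> \<tau> n)" for n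
    unfolding rho_prime_diag_def using assms by (intro continuous_intros) auto
  then have [measurable]: "(\<lambda>\<tau>. rho_prime_diag D hbar E U \<rho> \<tau> n) \<in> borel_measurable borel" for n
    by (rule borel_measurable_continuous_onI)
  show ?thesis unfolding diag_entropy_def by measurable
qed

lemma entropy_rho_prime_diag_ge:
  assumes rho: "density_matrix D \<rho>" and U: "unitary_matrix D U"
    and h: "h > 0" and s: "s > 0" and \<beta>: "\<beta> > 0"
    and c: "c \<le> diag_entropy D (\<lambda>n. Re (\<rho> n n)) - 2 * h - h * real J * (s + (1 + 1/s) * sqrt \<beta>)
                 - 2 * real D * exp (- (real J * h) / 2)"
    and small: "\<And>j. j \<in> {1..J} \<Longrightarrow>
       block_power D {k\<in>{..<D}. Re (\<rho> k k) \<le> exp (- (real (Suc j) * h))} U \<rho> E hbar \<tau>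
       \<le> \<beta> * exp (- (real j * h))"
  shows "c \<le> diag_entropy D (rho_prime_diag D hbar E U \<rho> \<tau>)"
proof -
  have "diag_entropy D (\<lambda>n. Re (\<rho> n n)) - 2 * h - h * real J * (s + (1 + 1/s) * sqrt \<beta>)
          - 2 * real D * exp (- (real J * h) / 2)
        \<le> diag_entropy D (rho_prime_diag D hbar E U \<rho> \<tau>)"
    using density_matrix_diag_nonneg[OF rho] density_matrix_diag_sum[OF rho]
      rho_prime_diag_nonneg[OF rho] rho_prime_diag_sum[OF rho U]
    by (intro entropy_ge_of_upper_mass_bounds h upper_mass_rho_prime_diag_le[OF rho U s _ \<beta>] small) auto
  with c show ?thesis by linarith
qed

text \<open>The block of populations below \<open>e\<^sup>-\<^sup>(\<^sup>j\<^sup>+\<^sup>1\<^sup>)\<^sup>h\<close> eventually has average power below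
  \<open>3 e\<^sup>-\<^sup>(\<^sup>j\<^sup>+\<^sup>1\<^sup>)\<^sup>h\<close>, so by Markov's inequality its power exceeds \<open>\<beta> e\<^sup>-\<^sup>j\<^sup>h\<close> on at most a
  fraction \<open>3 e\<^sup>-\<^sup>h/\<beta>\<close> of \<open>[0,T]\<close>.\<close>

lemma eventually_time_fraction_entropy_ge:
  fixes D J :: nat
  assumes rho: "density_matrix D \<rho>" and U: "unitary_matrix D U" and hbar: "hbar > 0"
    and E: "nondegenerate_spectrum D E" "nondegenerate_gaps D E"
    and h: "h > 0" and s: "s > 0" and \<beta>: "\<beta> > 0"
    and c: "c \<le> diag_entropy D (\<lambda>n. Re (\<rho> n n)) - 2 * h - h * real J * (s + (1 + 1/s) * sqrt \<beta>)
                 - 2 * real D * exp (- (real J * h) / 2)"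
  shows "\<forall>\<^sub>F T in at_top.
           time_fraction (\<lambda>\<tau>. c \<le> diag_entropy D (rho_prime_diag D hbar E U \<rho> \<tau>)) T
           \<ge> 1 - real J * (3 * exp (- h) / \<beta>)"
proof -
  define e where "e j = exp (- (real j * h))" for j :: nat
  define F where "F j = block_power D {k\<in>{..<D}. Re (\<rho> k k) \<le> e (Suc j)} U \<rho> E hbar" for j
  have "\<forall>\<^sub>F T in at_top. time_avg (F j) T < 3 * e (Suc j)" for j
    unfolding F_def e_def using rho U hbar E
    by (intro eventually_time_avg_block_power_less) auto
  then have "\<forall>\<^sub>F T in at_top. T > 0 \<and> (\<forall>j\<in>{1..J}. time_avg (F j) T < 3 * e (Suc j))"
    by (intro eventually_conj eventually_gt_at_top eventually_ball_finite) auto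
  then show ?thesis
  proof (rule eventually_mono, elim conjE)
    fix T :: real assume T: "T > 0" and avg: "\<forall>j\<in>{1..J}. time_avg (F j) T < 3 * e (Suc j)"
    define bad where "bad j = {\<tau> \<in> {0..T}. \<beta> * e j \<le> F j \<tau>}" for j
    have e_pos: "\<beta> * e j > 0" for j unfolding e_def using \<beta> by simp
    have bad_measure: "measure lborel (bad j) \<le> T * (3 * exp (- h) / \<beta>)" if j: "j \<in> {1..J}" for j
    proof -
      have "measure lborel (bad j) \<le> integral {0..T} (F j) / (\<beta> * e j)"
        unfolding bad_def F_def using T e_pos
        by (intro markov_inequality_Icc block_power_continuous block_power_nonneg) auto
      also have "\<dots> = time_avg (F j) T * T / (\<beta> * e j)" using T unfolding time_avg_def by simp
      also have "\<dots> \<le> 3 * e (Suc j) * T / (\<beta> * e j)"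
        using less_imp_le[OF bspec[OF avg j]] T e_pos[of j] by (intro divide_right_mono mult_right_mono) auto
      also have "\<dots> = T * (3 * exp (- h) / \<beta>)"
        unfolding e_def using \<beta> by (simp add: field_simps exp_add[symmetric] algebra_simps)
      finally show ?thesis .
    qed
    have bad_sets: "bad j \<in> sets lborel" for j
      unfolding bad_def F_def by (intro superlevel_set_Icc_measurable block_power_continuous)
    have good_sets: "{\<tau> \<in> {0..T}. c \<le> diag_entropy D (rho_prime_diag D hbar E U \<rho> \<tau>)} \<in> sets lborel"
    proof -
      have "hbar \<noteq> 0" using hbar by simp
      note [measurable] = entropy_rho_prime_diag_measurable[OF this, of D E U \<rho>]
      have "{\<tau>. c \<le> diag_entropy D (rho_prime_diag D hbar E U \<rho> \<tau>)} \<in> sets borel" by measurable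
      moreover have "{\<tau> \<in> {0..T}. c \<le> diag_entropy D (rho_prime_diag D hbar E U \<rho> \<tau>)}
          = {0..T} \<inter> {\<tau>. c \<le> diag_entropy D (rho_prime_diag D hbar E U \<rho> \<tau>)}" by blast
      ultimately show ?thesis by simp
    qed
    have good: "c \<le> diag_entropy D (rho_prime_diag D hbar E U \<rho> \<tau>)"
      if "\<tau> \<in> {0..T}" "\<And>j. j \<in> {1..J} \<Longrightarrow> \<tau> \<notin> bad j" for \<tau>
      using that by (intro entropy_rho_prime_diag_ge[OF rho U h s \<beta> c])
        (force simp: bad_def F_def e_def)
    have "time_fraction (\<lambda>\<tau>. c \<le> diag_entropy D (rho_prime_diag D hbar E U \<rho> \<tau>)) T
        \<ge> 1 - real (card {1..J}) * (3 * exp (- h) / \<beta>)"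
      by (rule time_fraction_ge_of_bad_sets[OF T finite_atLeastAtMost bad_sets _ bad_measure good_sets good])
        (auto simp: bad_def)
    then show "time_fraction (\<lambda>\<tau>. c \<le> diag_entropy D (rho_prime_diag D hbar E U \<rho> \<tau>)) T
        \<ge> 1 - real J * (3 * exp (- h) / \<beta>)" by simp
  qed
qed

lemma eventually_time_fraction_entropy_ge_levels:
  fixes D J :: nat
  assumes "density_matrix D \<rho>" "unitary_matrix D U" "hbar > 0"
    and "nondegenerate_spectrum D E" "nondegenerate_gaps D E"
    and J: "J \<ge> 1" and h: "h > 0"
    and c: "c \<le> diag_entropy D (\<lambda>n. Re (\<rho> n n)) - 3 * h - 2 * real D * exp (- (real J * h) / 2)"
  shows "\<forall>\<^sub>F T in at_top.
           time_fraction (\<lambda>\<tau>. c \<le> diag_entropy D (rho_prime_diag D hbar E U \<rho> \<tau>)) T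
           \<ge> 1 - 12 * real J ^ 3 * (1 + 2 * real J)\<^sup>2 * exp (- h)"
proof -
  txt \<open>With \<open>s = 1/(2J)\<close> and \<open>\<surd>\<beta> = 1/(2J(1 + 2J))\<close> the level tolerance
    \<open>s + (1 + 1/s)\<surd>\<beta>\<close> is \<open>1/J\<close>.\<close>
  define a where "a = 2 * real J"
  define s where "s = 1 / a"
  define \<beta> where "\<beta> = (1 / (a * (1 + a)))\<^sup>2"
  have a0: "a > 0" unfolding a_def using J by simp
  then have a: "a > 0" "a + a * a \<noteq> 0" using add_pos_pos[OF a0 mult_pos_pos[OF a0 a0]] by auto
  have s: "s > 0" and \<beta>: "\<beta> > 0" unfolding s_def \<beta>_def using a by auto
  have "sqrt \<beta> = 1 / (a * (1 + a))" unfolding \<beta>_def using a by simp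
  then have "s + (1 + 1/s) * sqrt \<beta> = 2 / a" unfolding s_def using a by (simp add: field_simps)
  then have tolerance: "h * real J * (s + (1 + 1/s) * sqrt \<beta>) = h" unfolding a_def using J by simp
  have c': "c \<le> diag_entropy D (\<lambda>n. Re (\<rho> n n)) - 2 * h - h * real J * (s + (1 + 1/s) * sqrt \<beta>)
                 - 2 * real D * exp (- (real J * h) / 2)"
    unfolding tolerance using c by linarith
  have bad_fraction: "real J * (3 * exp (- h) / \<beta>) = 12 * real J ^ 3 * (1 + 2 * real J)\<^sup>2 * exp (- h)"
    unfolding \<beta>_def a_def using J by (simp add: field_simps power2_eq_square power3_eq_cube)
  show ?thesis
    using eventually_time_fraction_entropy_ge[OF assms(1-5) h s \<beta> c'] unfolding bad_fraction .
qed

text \<open>With \<open>J \<epsilon> \<ge> 8 (ln d + 1)\<close> the \<open>d\<^sup>N\<close> populations below the lowest level \<open>e\<^sup>-\<^sup>J\<^sup>h\<close>,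
  \<open>h = \<epsilon> N / 4\<close>, carry entropy \<open>2 d\<^sup>N e\<^sup>-\<^sup>J\<^sup>h\<^sup>/\<^sup>2 \<le> 2 e\<^sup>-\<^sup>N\<close>.\<close>

lemma eventually_dim_exp_le:
  fixes d J :: nat and \<epsilon> :: real
  assumes "d > 0" "\<epsilon> > 0" "real J * \<epsilon> \<ge> 8 * (ln (real d) + 1)"
  shows "\<forall>\<^sub>F N in sequentially. 2 * real (d ^ N) * exp (- (real J * (\<epsilon> * real N / 4)) / 2) \<le> \<epsilon> * real N / 4"
proof -
  have "filterlim (\<lambda>x::real. \<epsilon> * x / 4 - 2 * exp (- x)) at_top at_top"
    using assms(2) by real_asymp
  then have "filterlim (\<lambda>N. \<epsilon> * real N / 4 - 2 * exp (- real N)) at_top sequentially"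
    by (rule filterlim_compose) (rule filterlim_real_sequentially)
  then have "\<forall>\<^sub>F N in sequentially. \<epsilon> * real N / 4 - 2 * exp (- real N) \<ge> 0"
    unfolding filterlim_at_top by blast
  then have large_N: "\<forall>\<^sub>F N in sequentially. 2 * exp (- real N) \<le> \<epsilon> * real N / 4"
    by (rule eventually_mono) simp
  have dim_exp: "real (d ^ N) * exp (- (real J * (\<epsilon> * real N / 4)) / 2) \<le> exp (- real N)" for N
  proof -
    have "real N * (8 * (ln (real d) + 1)) \<le> real N * (real J * \<epsilon>)"
      using assms(3) by (intro mult_left_mono) auto
    then have "real N * ln (real d) - real J * (\<epsilon> * real N / 4) / 2 \<le> - real N"
      by (simp add: algebra_simps)
    moreover have "real (d ^ N) = exp (real N * ln (real d))"
      using assms(1) by (simp add: exp_of_nat_mult)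
    ultimately show ?thesis by (simp flip: exp_add)
  qed
  show ?thesis using large_N
  proof (rule eventually_mono)
    fix N assume "2 * exp (- real N) \<le> \<epsilon> * real N / 4"
    then show "2 * real (d ^ N) * exp (- (real J * (\<epsilon> * real N / 4)) / 2) \<le> \<epsilon> * real N / 4"
      using dim_exp[of N] by linarith
  qed
qed

theorem corollary2:
  fixes d :: nat and c hbar :: real
    and E E' :: "nat \<Rightarrow> nat \<Rightarrow> real"
    and \<rho>0 U :: "nat \<Rightarrow> nat \<Rightarrow> nat \<Rightarrow> complex"
  assumes d2: "d \<ge> 2" and cpos: "c > 0" and hbar: "hbar > 0"
    and A: "\<forall>N\<ge>1. nondegenerate_spectrum (d ^ N) (E N) \<and> nondegenerate_spectrum (d ^ N) (E' N)"
    and B: "\<forall>N\<ge>1. nondegenerate_gaps (d ^ N) (E N) \<and> nondegenerate_gaps (d ^ N) (E' N)"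
    and rho: "\<forall>N\<ge>1. density_matrix (d ^ N) (\<rho>0 N)"
    and U: "\<forall>N\<ge>1. unitary_matrix (d ^ N) (U N)"
    and Deff: "\<forall>N\<ge>1. 1 / (\<Sum>n<d ^ N. (Re (\<rho>0 N n n))\<^sup>2) \<ge> exp (c * real N)"
  shows "\<forall>\<epsilon>>0. \<forall>\<delta>>0. \<forall>\<^sub>F N in sequentially. \<forall>\<^sub>F T in at_top.
           time_fraction
             (\<lambda>\<tau>. diag_entropy (d ^ N) (rho_prime_diag (d ^ N) hbar (E N) (U N) (\<rho>0 N) \<tau>)
                   \<ge> diag_entropy (d ^ N) (\<lambda>n. Re (\<rho>0 N n n)) - \<epsilon> * real N) T
           \<ge> 1 - \<delta>"
proof (intro allI impI)
  fix \<epsilon> \<delta> :: real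
  assume \<epsilon>: "\<epsilon> > 0" and \<delta>: "\<delta> > 0"
  define J :: nat where "J = nat \<lceil>8 * (ln (real d) + 1) / \<epsilon>\<rceil> + 1"
  define C where "C = 12 * real J ^ 3 * (1 + 2 * real J)\<^sup>2"
  have J: "J \<ge> 1" "real J * \<epsilon> \<ge> 8 * (ln (real d) + 1)"
    unfolding J_def using \<epsilon> by (auto simp: pos_divide_le_eq[symmetric]) linarith
  have "((\<lambda>N. C * exp (- (\<epsilon> * real N / 4))) \<longlongrightarrow> 0) sequentially"
    using \<epsilon> by real_asymp
  then have "\<forall>\<^sub>F N in sequentially. C * exp (- (\<epsilon> * real N / 4)) < \<delta>"
    using \<delta> by (rule order_tendstoD(2))
  moreover have "\<forall>\<^sub>F N in sequentially.
      2 * real (d ^ N) * exp (- (real J * (\<epsilon> * real N / 4)) / 2) \<le> \<epsilon> * real N / 4"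
    using d2 \<epsilon> J(2) by (intro eventually_dim_exp_le) auto
  ultimately show "\<forall>\<^sub>F N in sequentially. \<forall>\<^sub>F T in at_top.
           time_fraction
             (\<lambda>\<tau>. diag_entropy (d ^ N) (rho_prime_diag (d ^ N) hbar (E N) (U N) (\<rho>0 N) \<tau>)
                   \<ge> diag_entropy (d ^ N) (\<lambda>n. Re (\<rho>0 N n n)) - \<epsilon> * real N) T
           \<ge> 1 - \<delta>"
    using eventually_ge_at_top[of 1]
  proof eventually_elim
    case (elim N)
    then have "\<forall>\<^sub>F T in at_top. time_fraction
        (\<lambda>\<tau>. diag_entropy (d ^ N) (\<lambda>n. Re (\<rho>0 N n n)) - \<epsilon> * real N
              \<le> diag_entropy (d ^ N) (rho_prime_diag (d ^ N) hbar (E N) (U N) (\<rho>0 N) \<tau>)) T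
        \<ge> 1 - C * exp (- (\<epsilon> * real N / 4))"
      unfolding C_def using rho U A B hbar J(1) \<epsilon>
      by (intro eventually_time_fraction_entropy_ge_levels) auto
    then show ?case by (rule eventually_mono) (use elim in linarith)
  qed
qed
end
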